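(* Let $d\geq2$ and $K\geq1$. There is a constant $C=C(d,K)$ (and, where indicated, $C(\delta)$, $C(m)$ also depending on $\delta$, resp. $m$) such that for all $0<\epsilon\leq\frac12$, all $\tilde\xi\in\mathbb R^d$ with $|\tilde\xi|\leq K\epsilon^{-1}$, all $0<t\leq1$ and all $\gamma\in\mathbb R$, writing $B=\{\xi^f\in\mathbb R^d:\ |\xi^f|\leq K\epsilon^{-1}\}$: (i) $\displaystyle\int_B\frac{d\xi^f}{|\gamma+\tilde\xi\cdot\xi^f+\frac it|}\leq C\,\epsilon^{1-d}\min\Big(\frac{1}{|\tilde\xi|},\frac t\epsilon\Big)|\log\epsilon|$ (with $1/|\tilde\xi|=+\infty$ if $\tilde\xi=0$); (ii) for every $0<\delta\leq1$, $\displaystyle\int_B\frac{\mathbf 1\big(|\tilde\xi|\geq\delta\epsilon^{-1}\ \text{or}\ |\gamma+\tilde\xi\cdot\xi^f|\geq\delta\epsilon^{-2}\big)}{|\gamma+\tilde\xi\cdot\xi^f+\frac it|}\,d\xi^f\leq C(\delta)\,\epsilon^{2-d}|\log\epsilon|$; (iii) for every nonnegative $m\in C^1([0,\infty))$ with $m(0)=0$, $\displaystyle\int_B\frac{m(\epsilon|\tilde\xi|)}{|\gamma+\tilde\xi\cdot\xi^f+\frac it|}\,d\xi^f\leq C(m)\,\epsilon^{2-d}|\log\epsilon|$; (iv) $\displaystyle\int_B\frac{d\xi^f}{|\gamma+(\tilde\xi+\xi^f)\cdot\xi^f+\frac it|}\leq C\,\epsilon^{2-d}|\log\epsilon|$.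
   Context: Here $|\cdot|$ of the complex number $\gamma+\dots+\frac it$ is its modulus; $\xi\cdot\eta$ is the Euclidean inner product on $\mathbb R^d$. *)

theory Defs
  imports "HOL-Analysis.Analysis"
begin

definition freqBall :: "real \<Rightarrow> real \<Rightarrow> 'a::euclidean_space set" where
  "freqBall K eps = cball 0 (K / eps)"

definition C1_nonneg_vanishing :: "(real \<Rightarrow> real) \<Rightarrow> bool" where
  "C1_nonneg_vanishing m \<longleftrightarrow>
     (\<forall>x\<ge>0. m x \<ge> 0) \<and> m 0 = 0 \<and>
     (\<exists>m'. (\<forall>x\<ge>0. (m has_real_derivative m' x) (at x within {0..})) \<and> continuous_on {0..} m')"

end

theory Submission
  imports Defs
begin

(* Bounding 1/|A + i/t| by t, by 1/|A| and, for t <= 1, by 1/sqrt(A^2 + 1) reduces everything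
   to integrals of 1/sqrt(phi^2 + 1) over the ball of radius R = K/eps, enclosed in a cube.
   For a linear phase phi = gamma + xi.x one integrates first along a coordinate direction b
   with |xi.b| >= |xi|/d: every such line contributes a difference of arsinh values, which is
   O(ln(1 + R^2)/|xi|). For the quadratic phase gamma + (xi + x).x one completes the square in
   two coordinates; polar coordinates in that plane turn the planar integral into pi times a
   one-dimensional integral of slope one, which is O(ln(1 + R^2)). The remaining d - 2
   coordinates contribute (2R)^(d-2), and ln(1 + R^2) = O(|ln eps|) for eps <= 1/2.
   Parts (ii) and (iii) combine the bound for xi <> 0, which carries the factor 1/|xi|, with
   the trivial bound |A| >= delta/eps^2 and with m(s) = O(s). *)

lemma arsinh_le_ln_one_plus_double:
  fixes x :: real
  assumes "0 \<le> x" shows "arsinh x \<le> ln (1 + 2 * x)"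
proof -
  have "sqrt (x\<^sup>2 + 1) \<le> x + 1"
    using assms by (intro real_le_lsqrt) (auto simp: power2_eq_square algebra_simps)
  then show ?thesis
    unfolding arsinh_real_def using arsinh_real_aux[of x] by simp
qed

lemma sqrt_square_plus_one_diff_le: "sqrt (q\<^sup>2 + 1) \<le> sqrt (p\<^sup>2 + 1) + \<bar>q - p\<bar>" for p q :: real
proof -
  have "cmod (Complex q 1) \<le> cmod (Complex p 1) + cmod (Complex q 1 - Complex p 1)"
    by (rule norm_triangle_sub)
  then show ?thesis by (simp add: cmod_def)
qed

lemma arsinh_diff_le_ln_nonneg:
  fixes p q :: real
  assumes "0 \<le> p" "p \<le> q" shows "arsinh q - arsinh p \<le> ln (1 + 2 * (q - p))"
proof -
  define P where "P = p + sqrt (p\<^sup>2 + 1)"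
  have P: "1 \<le> P" unfolding P_def using assms by (simp add: add_increasing)
  have "q + sqrt (q\<^sup>2 + 1) \<le> P + 2 * (q - p)"
    unfolding P_def using sqrt_square_plus_one_diff_le[of q p] assms by simp
  also have "\<dots> \<le> P * (1 + 2 * (q - p))"
    using mult_right_mono[of 1 P "2 * (q - p)"] P assms by (simp add: algebra_simps)
  finally have "ln (q + sqrt (q\<^sup>2 + 1)) \<le> ln (P * (1 + 2 * (q - p)))"
    using arsinh_real_aux[of q] by simp
  also have "\<dots> = ln P + ln (1 + 2 * (q - p))"
    using P assms by (simp add: ln_mult)
  finally show ?thesis unfolding arsinh_real_def P_def by simp
qed

lemma arsinh_diff_le_ln:
  fixes p q :: real
  assumes "p \<le> q" shows "arsinh q - arsinh p \<le> 2 * ln (1 + 2 * (q - p))"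
proof -
  have ln_nonneg: "0 \<le> ln (1 + 2 * (q - p))" using assms by simp
  consider "0 \<le> p" | "q \<le> 0" | "p < 0" "0 < q" by linarith
  then show ?thesis
  proof cases
    case 1
    then show ?thesis using arsinh_diff_le_ln_nonneg[OF 1 assms] ln_nonneg by linarith
  next
    case 2
    then have "arsinh (- p) - arsinh (- q) \<le> ln (1 + 2 * (- p - - q))"
      using assms by (intro arsinh_diff_le_ln_nonneg) auto
    then show ?thesis using ln_nonneg by simp
  next
    case 3
    have "arsinh q \<le> ln (1 + 2 * q)" "arsinh (- p) \<le> ln (1 + 2 * (- p))"
      using 3 by (intro arsinh_le_ln_one_plus_double; simp)+
    moreover have "ln (1 + 2 * q) \<le> ln (1 + 2 * (q - p))" "ln (1 + 2 * (- p)) \<le> ln (1 + 2 * (q - p))"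
      using 3 by simp_all
    ultimately show ?thesis by simp
  qed
qed

lemma nn_integral_Icc_inverse_sqrt_affine_le:
  fixes c \<beta> R :: real
  assumes "\<beta> \<noteq> 0" "0 \<le> R"
  shows "(\<integral>\<^sup>+ y. ennreal (1 / sqrt ((c + \<beta> * y)\<^sup>2 + 1)) * indicator {-R..R} y \<partial>lborel)
           \<le> ennreal (2 * ln (1 + 4 * R * \<bar>\<beta>\<bar>) / \<bar>\<beta>\<bar>)"
proof -
  define F where "F y = arsinh (c + \<beta> * y) / \<beta>" for y
  have "(F has_real_derivative 1 / sqrt ((c + \<beta> * y)\<^sup>2 + 1)) (at y)" for y
    unfolding F_def using assms(1)
    by (auto intro!: derivative_eq_intros DERIV_chain2[OF arsinh_real_has_field_derivative])
  then have integral_eq: "(\<integral>\<^sup>+ y. ennreal (1 / sqrt ((c + \<beta> * y)\<^sup>2 + 1)) * indicator {-R..R} y \<partial>lborel)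
      = F R - F (- R)"
    using assms(2) by (intro nn_integral_FTC_Icc) auto
  have "F R - F (- R) = (arsinh (c + \<bar>\<beta>\<bar> * R) - arsinh (c - \<bar>\<beta>\<bar> * R)) / \<bar>\<beta>\<bar>"
    unfolding F_def using assms(1) by (cases "\<beta> > 0") (auto simp: diff_divide_distrib)
  also have "\<dots> \<le> 2 * ln (1 + 4 * R * \<bar>\<beta>\<bar>) / \<bar>\<beta>\<bar>"
    using arsinh_diff_le_ln[of "c - \<bar>\<beta>\<bar> * R" "c + \<bar>\<beta>\<bar> * R"] assms
    by (intro divide_right_mono) (auto simp: algebra_simps)
  finally show ?thesis unfolding integral_eq by (rule ennreal_leI)
qed

lemma borel_measurable_sum_of_squares [measurable]:
  "(\<lambda>p::real \<times> real. (fst p)\<^sup>2 + (snd p)\<^sup>2) \<in> borel_measurable borel"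
  by (intro borel_measurable_continuous_onI continuous_intros)

lemma emeasure_lborel_sum_of_squares_le:
  "emeasure lborel {p::real \<times> real. (fst p)\<^sup>2 + (snd p)\<^sup>2 \<le> a} = (if a < 0 then 0 else ennreal (pi * a))"
proof (cases "a < 0")
  case True
  then have "{p::real \<times> real. (fst p)\<^sup>2 + (snd p)\<^sup>2 \<le> a} = {}"
    by (auto simp: not_le intro: add_nonneg_nonneg less_le_trans)
  then show ?thesis using True by simp
next
  case False
  then have "{p::real \<times> real. (fst p)\<^sup>2 + (snd p)\<^sup>2 \<le> a} = cball 0 (sqrt a)"
    by (auto simp: norm_Pair real_le_rsqrt real_sqrt_le_iff intro: real_le_lsqrt)
  then show ?thesis using False by (simp add: emeasure_cball unit_ball_vol_2)
qed

lemma distr_lborel_sum_of_squares: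
  "distr (lborel :: (real \<times> real) measure) borel (\<lambda>p. (fst p)\<^sup>2 + (snd p)\<^sup>2)
     = density lborel (\<lambda>u. ennreal pi * indicator {0..} u)" (is "?M = ?N")
proof (rule measure_eqI_generator_eq[where E="range atMost" and \<Omega>=UNIV and A="\<lambda>i. {..real i}"])
  have "emeasure ?N {..a} = (if a < 0 then 0 else ennreal (pi * a))" for a :: real
  proof -
    have "emeasure ?N {..a} = (\<integral>\<^sup>+ u. ennreal pi * indicator {0..a} u \<partial>lborel)"
      by (subst emeasure_density) (auto intro!: nn_integral_cong split: split_indicator)
    then show ?thesis by (simp add: nn_integral_cmult_indicator ennreal_mult)
  qed
  moreover have M_atMost: "emeasure ?M {..a} = (if a < 0 then 0 else ennreal (pi * a))" for a :: real
    by (subst emeasure_distr) (auto simp: vimage_def emeasure_lborel_sum_of_squares_le)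
  ultimately show "emeasure ?M X = emeasure ?N X" if "X \<in> range atMost" for X
    using that by auto
  show "emeasure ?M {..real i} \<noteq> \<infinity>" for i
    using M_atMost[of "real i"] by simp
  have "sets (borel :: real measure) = sigma_sets UNIV (range atMost)"
    by (subst borel_eq_atMost) simp
  then show "sets ?M = sigma_sets UNIV (range atMost)" "sets ?N = sigma_sets UNIV (range atMost)"
    by simp_all
qed (auto simp: Int_stable_def intro: real_arch_simple)

lemma nn_integral_lborel_radial:
  fixes h :: "real \<Rightarrow> ennreal"
  assumes [measurable]: "h \<in> borel_measurable borel"
  shows "(\<integral>\<^sup>+ p. h ((fst p)\<^sup>2 + (snd p)\<^sup>2) \<partial>(lborel :: (real \<times> real) measure))
           = ennreal pi * (\<integral>\<^sup>+ u. h u * indicator {0..} u \<partial>lborel)"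
proof -
  have "(\<integral>\<^sup>+ p. h ((fst p)\<^sup>2 + (snd p)\<^sup>2) \<partial>(lborel :: (real \<times> real) measure))
        = (\<integral>\<^sup>+ u. h u \<partial>density lborel (\<lambda>u. ennreal pi * indicator {0..} u))"
    by (simp add: nn_integral_distr distr_lborel_sum_of_squares[symmetric])
  also have "\<dots> = ennreal pi * (\<integral>\<^sup>+ u. h u * indicator {0..} u \<partial>lborel)"
    by (simp add: nn_integral_density nn_integral_cmult[symmetric] mult_ac)
  finally show ?thesis .
qed

lemma nn_integral_lborel_shifted_radial:
  fixes h :: "real \<Rightarrow> ennreal" and p1 p2 :: real
  assumes [measurable]: "h \<in> borel_measurable borel"
  shows "(\<integral>\<^sup>+ y2. \<integral>\<^sup>+ y1. h ((y1 + p1)\<^sup>2 + (y2 + p2)\<^sup>2) \<partial>lborel \<partial>lborel)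
           = ennreal pi * (\<integral>\<^sup>+ u. h u * indicator {0..} u \<partial>lborel)"
proof -
  define g where "g q = h ((fst q)\<^sup>2 + (snd q)\<^sup>2)" for q :: "real \<times> real"
  have [measurable]: "g \<in> borel_measurable borel"
    unfolding g_def by measurable
  have "(\<integral>\<^sup>+ y2. \<integral>\<^sup>+ y1. h ((y1 + p1)\<^sup>2 + (y2 + p2)\<^sup>2) \<partial>lborel \<partial>lborel)
      = (\<integral>\<^sup>+ y2. \<integral>\<^sup>+ y1. g ((p2, p1) + (y2, y1)) \<partial>lborel \<partial>lborel)"
    by (simp add: g_def add.commute)
  also have "\<dots> = (\<integral>\<^sup>+ q. g ((p2, p1) + q) \<partial>(lborel \<Otimes>\<^sub>M lborel))"
    by (rule lborel.nn_integral_fst) (simp add: lborel_prod)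
  also have "\<dots> = (\<integral>\<^sup>+ q. g q \<partial>distr lborel borel ((+) (p2, p1)))"
    by (simp add: lborel_prod nn_integral_distr)
  also have "\<dots> = (\<integral>\<^sup>+ q. g q \<partial>lborel)"
    by (simp only: lborel_distr_plus)
  also have "\<dots> = ennreal pi * (\<integral>\<^sup>+ u. h u * indicator {0..} u \<partial>lborel)"
    unfolding g_def by (rule nn_integral_lborel_radial) fact
  finally show ?thesis .
qed

lemma (in product_sigma_finite) product_nn_integral_insert_insert:
  assumes "finite I" "i \<notin> insert j I" "j \<notin> I"
    and f: "f \<in> borel_measurable (Pi\<^sub>M (insert i (insert j I)) M)"
  shows "integral\<^sup>N (Pi\<^sub>M (insert i (insert j I)) M) f
           = (\<integral>\<^sup>+ x. \<integral>\<^sup>+ y. \<integral>\<^sup>+ z. f (x(j := y, i := z)) \<partial>M i \<partial>M j \<partial>Pi\<^sub>M I M)"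
proof -
  have "(\<lambda>(x, z). f (x(i := z))) \<in> borel_measurable (Pi\<^sub>M (insert j I) M \<Otimes>\<^sub>M M i)"
    using measurable_comp[OF measurable_add_dim f] by (simp add: comp_def case_prod_beta')
  then have "(\<lambda>x. \<integral>\<^sup>+ z. f (x(i := z)) \<partial>M i) \<in> borel_measurable (Pi\<^sub>M (insert j I) M)"
    by (rule M.borel_measurable_nn_integral)
  then show ?thesis
    using assms by (simp add: product_nn_integral_insert)
qed

lemma nn_integral_lborel_Basis_coordinates:
  fixes f :: "'a::euclidean_space \<Rightarrow> ennreal"
  assumes "f \<in> borel_measurable borel"
  shows "integral\<^sup>N lborel f = (\<integral>\<^sup>+ z. f (\<Sum>b\<in>Basis. z b *\<^sub>R b) \<partial>Pi\<^sub>M Basis (\<lambda>_. lborel))"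
  using assms by (subst lborel_eq) (simp add: nn_integral_distr)

lemma inner_sum_Basis_scaleR:
  fixes z :: "'a::euclidean_space \<Rightarrow> real"
  assumes "b \<in> Basis" shows "(\<Sum>b'\<in>Basis. z b' *\<^sub>R b') \<bullet> b = z b"
  using assms by (simp add: inner_sum_left inner_Basis if_distrib sum.If_cases cong: if_cong)

lemma nn_integral_cball_le_cube:
  fixes f :: "'a::euclidean_space \<Rightarrow> ennreal"
  shows "(\<integral>\<^sup>+ x. f x * indicator (cball 0 R) x \<partial>lborel)
           \<le> (\<integral>\<^sup>+ x. f x * (\<Prod>b\<in>Basis. indicator {-R..R} (x \<bullet> b)) \<partial>lborel)"
proof (rule nn_integral_mono)
  fix x :: 'a
  have "(\<Prod>b\<in>Basis. indicator {-R..R} (x \<bullet> b) :: ennreal) = 1" if "x \<in> cball 0 R"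
    using that Basis_le_norm[of _ x] by (intro prod.neutral) (force simp: indicator_def)
  then show "f x * indicator (cball 0 R) x \<le> f x * (\<Prod>b\<in>Basis. indicator {-R..R} (x \<bullet> b))"
    by (cases "x \<in> cball 0 R") auto
qed

lemma nn_integral_cube_eq_plane_slices:
  fixes f :: "'a::euclidean_space \<Rightarrow> ennreal"
  assumes [measurable]: "f \<in> borel_measurable borel"
    and b1: "b1 \<in> Basis" and b2: "b2 \<in> Basis" and "b1 \<noteq> b2"
  defines "I \<equiv> Basis - {b1, b2}"
  shows "(\<integral>\<^sup>+ x. f x * (\<Prod>b\<in>Basis. indicator {-R..R} (x \<bullet> b)) \<partial>lborel)
    = (\<integral>\<^sup>+ z. (\<integral>\<^sup>+ y2. \<integral>\<^sup>+ y1. f (y1 *\<^sub>R b1 + y2 *\<^sub>R b2 + (\<Sum>b\<in>I. z b *\<^sub>R b))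
          * indicator {-R..R} y1 * indicator {-R..R} y2 \<partial>lborel \<partial>lborel)
        * (\<Prod>b\<in>I. indicator {-R..R} (z b)) \<partial>Pi\<^sub>M I (\<lambda>_. lborel))"
proof -
  interpret product_sigma_finite "\<lambda>_::'a. lborel :: real measure" by standard
  have Basis_eq: "Basis = insert b1 (insert b2 I)" and "finite I"
    and not_in: "b1 \<notin> insert b2 I" "b2 \<notin> I"
    using b1 b2 \<open>b1 \<noteq> b2\<close> by (auto simp: I_def)
  define F where "F z = f (\<Sum>b\<in>Basis. z b *\<^sub>R b) * (\<Prod>b\<in>Basis. indicator {-R..R} (z b))"
    for z :: "'a \<Rightarrow> real"
  have [measurable]: "F \<in> borel_measurable (Pi\<^sub>M Basis (\<lambda>_. lborel))"
    unfolding F_def by measurable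
  have slice_eq: "F (z(b2 := y2, b1 := y1))
      = f (y1 *\<^sub>R b1 + y2 *\<^sub>R b2 + (\<Sum>b\<in>I. z b *\<^sub>R b)) * indicator {-R..R} y1 * indicator {-R..R} y2
        * (\<Prod>b\<in>I. indicator {-R..R} (z b))" for z y1 y2
  proof -
    have sum_eq: "(\<Sum>b\<in>Basis. (z(b2 := y2, b1 := y1)) b *\<^sub>R b) = y1 *\<^sub>R b1 + y2 *\<^sub>R b2 + (\<Sum>b\<in>I. z b *\<^sub>R b)"
      unfolding Basis_eq using \<open>finite I\<close> not_in by (simp add: add.assoc) (auto intro!: sum.cong)
    have prod_Basis_eq: "(\<Prod>b\<in>Basis. indicator {-R..R} ((z(b2 := y2, b1 := y1)) b))
        = indicator {-R..R} y1 * indicator {-R..R} y2 * (\<Prod>b\<in>I. indicator {-R..R} ((z(b2 := y2, b1 := y1)) b))"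
      unfolding Basis_eq using \<open>finite I\<close> not_in \<open>b1 \<noteq> b2\<close> by (simp add: mult.assoc)
    have prod_I_eq: "(\<Prod>b\<in>I. indicator {-R..R} ((z(b2 := y2, b1 := y1)) b)) = (\<Prod>b\<in>I. indicator {-R..R} (z b))"
      using not_in by (auto intro: prod.cong)
    show ?thesis
      unfolding F_def sum_eq prod_Basis_eq prod_I_eq by (simp only: mult_ac)
  qed
  have "(\<integral>\<^sup>+ x. f x * (\<Prod>b\<in>Basis. indicator {-R..R} (x \<bullet> b)) \<partial>lborel) = integral\<^sup>N (Pi\<^sub>M Basis (\<lambda>_. lborel)) F"
    unfolding F_def
    by (subst nn_integral_lborel_Basis_coordinates) (auto simp: inner_sum_Basis_scaleR cong: prod.cong)
  also have "\<dots> = (\<integral>\<^sup>+ z. \<integral>\<^sup>+ y2. \<integral>\<^sup>+ y1. F (z(b2 := y2, b1 := y1)) \<partial>lborel \<partial>lborel \<partial>Pi\<^sub>M I (\<lambda>_. lborel))"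
    unfolding Basis_eq using \<open>finite I\<close> not_in
    by (intro product_nn_integral_insert_insert) (simp_all add: Basis_eq[symmetric])
  also have "\<dots> = (\<integral>\<^sup>+ z. (\<integral>\<^sup>+ y2. \<integral>\<^sup>+ y1. f (y1 *\<^sub>R b1 + y2 *\<^sub>R b2 + (\<Sum>b\<in>I. z b *\<^sub>R b))
          * indicator {-R..R} y1 * indicator {-R..R} y2 \<partial>lborel \<partial>lborel)
        * (\<Prod>b\<in>I. indicator {-R..R} (z b)) \<partial>Pi\<^sub>M I (\<lambda>_. lborel))"
    unfolding slice_eq by (simp add: nn_integral_multc)
  finally show ?thesis .
qed

lemma nn_integral_cball_le_plane_slices:
  fixes f :: "'a::euclidean_space \<Rightarrow> ennreal" and R M :: real
  assumes [measurable]: "f \<in> borel_measurable borel"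
    and b1: "b1 \<in> Basis" and b2: "b2 \<in> Basis" and "b1 \<noteq> b2" and "0 \<le> R" and "0 \<le> M"
    and slice: "\<And>w. w \<bullet> b1 = 0 \<Longrightarrow> w \<bullet> b2 = 0 \<Longrightarrow>
      (\<integral>\<^sup>+ y2. \<integral>\<^sup>+ y1. f (y1 *\<^sub>R b1 + y2 *\<^sub>R b2 + w) * indicator {-R..R} y1 * indicator {-R..R} y2
         \<partial>lborel \<partial>lborel) \<le> ennreal M"
  shows "(\<integral>\<^sup>+ x. f x * indicator (cball 0 R) x \<partial>lborel) \<le> ennreal ((2 * R) ^ (DIM('a) - 2) * M)"
proof -
  interpret product_sigma_finite "\<lambda>_::'a. lborel :: real measure" by standard
  define I where "I = Basis - {b1, b2}"
  have "finite I" and card_I: "card I = DIM('a) - 2"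
    using b1 b2 \<open>b1 \<noteq> b2\<close> by (simp_all add: I_def card_Diff_subset)
  have "(\<Sum>b\<in>I. z b *\<^sub>R b) \<bullet> b1 = 0" "(\<Sum>b\<in>I. z b *\<^sub>R b) \<bullet> b2 = 0" for z :: "'a \<Rightarrow> real"
    using b1 b2 by (auto simp: inner_sum_left inner_Basis I_def intro!: sum.neutral)
  note slice_bound = slice[OF this]
  have "(\<integral>\<^sup>+ x. f x * indicator (cball 0 R) x \<partial>lborel)
      \<le> (\<integral>\<^sup>+ x. f x * (\<Prod>b\<in>Basis. indicator {-R..R} (x \<bullet> b)) \<partial>lborel)"
    by (rule nn_integral_cball_le_cube)
  also have "\<dots> \<le> (\<integral>\<^sup>+ z. ennreal M * (\<Prod>b\<in>I. indicator {-R..R} (z b)) \<partial>Pi\<^sub>M I (\<lambda>_. lborel))"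
    unfolding nn_integral_cube_eq_plane_slices[OF assms(1-4)] I_def[symmetric]
    by (intro nn_integral_mono mult_right_mono slice_bound) simp
  also have "\<dots> = ennreal M * (\<integral>\<^sup>+ z. (\<Prod>b\<in>I. indicator {-R..R} (z b)) \<partial>Pi\<^sub>M I (\<lambda>_. lborel))"
    by (rule nn_integral_cmult) (use \<open>finite I\<close> in measurable)
  also have "(\<integral>\<^sup>+ z. (\<Prod>b\<in>I. indicator {-R..R} (z b)) \<partial>Pi\<^sub>M I (\<lambda>_. lborel))
      = (\<Prod>b\<in>I. \<integral>\<^sup>+ y. indicator {-R..R} y \<partial>lborel)"
    by (rule product_nn_integral_prod) (use \<open>finite I\<close> in auto)
  also have "ennreal M * (\<Prod>b\<in>I. \<integral>\<^sup>+ y. indicator {-R..R} y \<partial>lborel)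
      = ennreal M * ennreal ((2 * R) ^ (DIM('a) - 2))"
    using \<open>0 \<le> R\<close> card_I by (simp add: prod_ennreal[symmetric] ennreal_power)
  finally show ?thesis
    using \<open>0 \<le> R\<close> \<open>0 \<le> M\<close> by (simp add: ennreal_mult mult.commute)
qed

lemma obtain_dominant_Basis_coordinate:
  fixes \<xi> :: "'a::euclidean_space"
  obtains b where "b \<in> Basis" "norm \<xi> \<le> real DIM('a) * \<bar>\<xi> \<bullet> b\<bar>"
proof -
  have "Max ((\<lambda>b. \<bar>\<xi> \<bullet> b\<bar>) ` Basis) \<in> (\<lambda>b. \<bar>\<xi> \<bullet> b\<bar>) ` Basis"
    by (rule Max_in) auto
  then obtain b where b: "b \<in> Basis" "Max ((\<lambda>b. \<bar>\<xi> \<bullet> b\<bar>) ` Basis) = \<bar>\<xi> \<bullet> b\<bar>"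
    by blast
  have "norm \<xi> \<le> (\<Sum>i\<in>Basis. \<bar>\<xi> \<bullet> i\<bar>)"
    by (rule norm_le_l1)
  also have "\<dots> \<le> real DIM('a) * \<bar>\<xi> \<bullet> b\<bar>"
    using sum_bounded_above[of Basis "\<lambda>i. \<bar>\<xi> \<bullet> i\<bar>" "\<bar>\<xi> \<bullet> b\<bar>"] b(2)[symmetric] by simp
  finally show ?thesis using b that by blast
qed

lemma obtain_other_Basis_vector:
  assumes "DIM('a::euclidean_space) \<ge> 2" "(b1::'a) \<in> Basis"
  obtains b2 where "b2 \<in> Basis" "b2 \<noteq> b1"
proof -
  have "card (Basis - {b1}) \<ge> 1"
    using assms by (simp add: card_Diff_singleton)
  then have "Basis - {b1} \<noteq> {}"
    by (metis card.empty not_one_le_zero)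
  then show ?thesis
    using that by blast
qed

lemma nn_integral_line_inverse_sqrt_linear_le:
  fixes \<xi> b v :: "'a::real_inner" and \<gamma> R :: real
  assumes "\<xi> \<bullet> b \<noteq> 0" "0 \<le> R"
  shows "(\<integral>\<^sup>+ y. ennreal (1 / sqrt ((\<gamma> + \<xi> \<bullet> (y *\<^sub>R b + v))\<^sup>2 + 1)) * indicator {-R..R} y \<partial>lborel)
           \<le> ennreal (2 * ln (1 + 4 * R * \<bar>\<xi> \<bullet> b\<bar>) / \<bar>\<xi> \<bullet> b\<bar>)"
proof -
  have "\<gamma> + \<xi> \<bullet> (y *\<^sub>R b + v) = (\<gamma> + \<xi> \<bullet> v) + (\<xi> \<bullet> b) * y" for y
    by (simp add: inner_add_right)
  then show ?thesis
    using nn_integral_Icc_inverse_sqrt_affine_le[OF assms, of "\<gamma> + \<xi> \<bullet> v"] by (simp add: add.assoc)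
qed

lemma two_ln_div_le_of_dominant:
  fixes \<beta> n d R :: real
  assumes "0 < \<bar>\<beta>\<bar>" "\<bar>\<beta>\<bar> \<le> R" "0 < n" "n \<le> d * \<bar>\<beta>\<bar>"
  shows "2 * ln (1 + 4 * R * \<bar>\<beta>\<bar>) / \<bar>\<beta>\<bar> \<le> 2 * d / n * ln (1 + 4 * R\<^sup>2)"
proof -
  have "0 \<le> R"
    using assms by linarith
  then have "4 * R * \<bar>\<beta>\<bar> \<le> 4 * R\<^sup>2"
    using mult_left_mono[OF assms(2)] by (simp add: power2_eq_square)
  then have "ln (1 + 4 * R * \<bar>\<beta>\<bar>) \<le> ln (1 + 4 * R\<^sup>2)"
    using assms by (intro ln_mono) (auto simp: add_pos_nonneg)
  moreover have "1 / \<bar>\<beta>\<bar> \<le> d / n"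
    using assms by (simp add: field_simps)
  ultimately have "ln (1 + 4 * R * \<bar>\<beta>\<bar>) * (1 / \<bar>\<beta>\<bar>) \<le> ln (1 + 4 * R\<^sup>2) * (d / n)"
    using assms by (intro mult_mono) auto
  moreover have "2 * ln (1 + 4 * R * \<bar>\<beta>\<bar>) / \<bar>\<beta>\<bar> = 2 * (ln (1 + 4 * R * \<bar>\<beta>\<bar>) * (1 / \<bar>\<beta>\<bar>))"
    "2 * d / n * ln (1 + 4 * R\<^sup>2) = 2 * (ln (1 + 4 * R\<^sup>2) * (d / n))"
    by simp_all
  ultimately show ?thesis
    by linarith
qed

lemma nn_integral_cball_inverse_sqrt_linear_le:
  fixes \<xi> :: "'a::euclidean_space" and R \<gamma> :: real
  assumes dim: "DIM('a) \<ge> 2" and "\<xi> \<noteq> 0" and "0 < R" and "norm \<xi> \<le> R"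
  shows "(\<integral>\<^sup>+ x. ennreal (1 / sqrt ((\<gamma> + \<xi> \<bullet> x)\<^sup>2 + 1)) * indicator (cball 0 R) x \<partial>lborel)
           \<le> ennreal ((2 * R) ^ (DIM('a) - 1) * (2 * real DIM('a) / norm \<xi> * ln (1 + 4 * R\<^sup>2)))"
proof -
  obtain b1 where b1: "b1 \<in> Basis" and dominant: "norm \<xi> \<le> DIM('a) * \<bar>\<xi> \<bullet> b1\<bar>"
    by (rule obtain_dominant_Basis_coordinate)
  obtain b2 where b2: "b2 \<in> Basis" "b2 \<noteq> b1"
    using obtain_other_Basis_vector[OF dim b1] by blast
  have "0 < \<bar>\<xi> \<bullet> b1\<bar>"
    using dominant \<open>\<xi> \<noteq> 0\<close> by (auto simp: not_less intro: antisym)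
  define B where "B = 2 * real DIM('a) / norm \<xi> * ln (1 + 4 * R\<^sup>2)"
  have "0 \<le> B"
    unfolding B_def by simp
  have line_bound: "(\<integral>\<^sup>+ y1. ennreal (1 / sqrt ((\<gamma> + \<xi> \<bullet> (y1 *\<^sub>R b1 + v))\<^sup>2 + 1))
      * indicator {-R..R} y1 \<partial>lborel) \<le> ennreal B" for v
  proof -
    have "\<bar>\<xi> \<bullet> b1\<bar> \<le> R"
      using Basis_le_norm[OF b1, of \<xi>] \<open>norm \<xi> \<le> R\<close> by simp
    then have "2 * ln (1 + 4 * R * \<bar>\<xi> \<bullet> b1\<bar>) / \<bar>\<xi> \<bullet> b1\<bar> \<le> B"
      unfolding B_def using \<open>0 < \<bar>\<xi> \<bullet> b1\<bar>\<close> \<open>\<xi> \<noteq> 0\<close> dominant by (intro two_ln_div_le_of_dominant) auto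
    then show ?thesis
      using \<open>0 < \<bar>\<xi> \<bullet> b1\<bar>\<close> \<open>0 < R\<close>
      by (intro order_trans[OF nn_integral_line_inverse_sqrt_linear_le] ennreal_leI) auto
  qed
  have "(\<integral>\<^sup>+ x. ennreal (1 / sqrt ((\<gamma> + \<xi> \<bullet> x)\<^sup>2 + 1)) * indicator (cball 0 R) x \<partial>lborel)
      \<le> ennreal ((2 * R) ^ (DIM('a) - 2) * (2 * R * B))"
  proof (rule nn_integral_cball_le_plane_slices[OF _ b1 b2(1) b2(2)[symmetric]])
    fix w :: 'a
    have "(\<integral>\<^sup>+ y2. \<integral>\<^sup>+ y1. ennreal (1 / sqrt ((\<gamma> + \<xi> \<bullet> (y1 *\<^sub>R b1 + y2 *\<^sub>R b2 + w))\<^sup>2 + 1))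
          * indicator {-R..R} y1 * indicator {-R..R} y2 \<partial>lborel \<partial>lborel)
        \<le> (\<integral>\<^sup>+ y2. ennreal B * indicator {-R..R} y2 \<partial>lborel)"
      using line_bound by (intro nn_integral_mono) (simp add: nn_integral_multc mult_right_mono add.assoc)
    also have "\<dots> = ennreal (2 * R * B)"
      using \<open>0 < R\<close> \<open>0 \<le> B\<close> by (simp add: nn_integral_cmult_indicator ennreal_mult[symmetric] mult_ac)
    finally show "(\<integral>\<^sup>+ y2. \<integral>\<^sup>+ y1. ennreal (1 / sqrt ((\<gamma> + \<xi> \<bullet> (y1 *\<^sub>R b1 + y2 *\<^sub>R b2 + w))\<^sup>2 + 1))
          * indicator {-R..R} y1 * indicator {-R..R} y2 \<partial>lborel \<partial>lborel) \<le> ennreal (2 * R * B)" .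
  qed (use \<open>0 < R\<close> \<open>0 \<le> B\<close> in simp_all)
  also have "(2 * R) ^ (DIM('a) - 2) * (2 * R * B) = (2 * R) ^ (DIM('a) - 1) * B"
  proof -
    have "DIM('a) - 1 = Suc (DIM('a) - 2)"
      using dim by simp
    then show ?thesis by (simp add: mult_ac)
  qed
  finally show ?thesis unfolding B_def .
qed

lemma nn_integral_square_inverse_sqrt_radial_le:
  fixes c p1 p2 R :: real
  assumes "0 < R" "\<bar>p1\<bar> \<le> R / 2" "\<bar>p2\<bar> \<le> R / 2"
  shows "(\<integral>\<^sup>+ y2. \<integral>\<^sup>+ y1. ennreal (1 / sqrt ((c + ((y1 + p1)\<^sup>2 + (y2 + p2)\<^sup>2))\<^sup>2 + 1))
             * indicator {-R..R} y1 * indicator {-R..R} y2 \<partial>lborel \<partial>lborel)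
           \<le> ennreal (2 * pi * ln (1 + 20 * R\<^sup>2))"
proof -
  \<comment> \<open>slope \<open>1 * u\<close> so that the arsinh bound for affine phases applies verbatim\<close>
  define H where "H u = ennreal (1 / sqrt ((c + 1 * u)\<^sup>2 + 1)) * indicator {- (5 * R\<^sup>2)..5 * R\<^sup>2} u" for u
  have [measurable]: "H \<in> borel_measurable borel"
    unfolding H_def by measurable
  have "(y1 + p1)\<^sup>2 + (y2 + p2)\<^sup>2 \<in> {- (5 * R\<^sup>2)..5 * R\<^sup>2}" if "\<bar>y1\<bar> \<le> R" "\<bar>y2\<bar> \<le> R" for y1 y2
  proof -
    have "(y1 + p1)\<^sup>2 \<le> (3 / 2 * R)\<^sup>2" "(y2 + p2)\<^sup>2 \<le> (3 / 2 * R)\<^sup>2"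
      using that assms by (subst power2_le_iff_abs_le; linarith)+
    moreover have "(3 / 2 * R)\<^sup>2 = 9 / 4 * R\<^sup>2" "0 \<le> (y1 + p1)\<^sup>2 + (y2 + p2)\<^sup>2" "0 \<le> R\<^sup>2"
      by (simp_all add: power2_eq_square)
    ultimately show ?thesis
      unfolding atLeastAtMost_iff by linarith
  qed
  then have "ennreal (1 / sqrt ((c + ((y1 + p1)\<^sup>2 + (y2 + p2)\<^sup>2))\<^sup>2 + 1))
      * indicator {-R..R} y1 * indicator {-R..R} y2 \<le> H ((y1 + p1)\<^sup>2 + (y2 + p2)\<^sup>2)" for y1 y2
    unfolding H_def by (cases "\<bar>y1\<bar> \<le> R \<and> \<bar>y2\<bar> \<le> R") (auto simp: abs_le_iff)
  then have "(\<integral>\<^sup>+ y2. \<integral>\<^sup>+ y1. ennreal (1 / sqrt ((c + ((y1 + p1)\<^sup>2 + (y2 + p2)\<^sup>2))\<^sup>2 + 1))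
        * indicator {-R..R} y1 * indicator {-R..R} y2 \<partial>lborel \<partial>lborel)
      \<le> (\<integral>\<^sup>+ y2. \<integral>\<^sup>+ y1. H ((y1 + p1)\<^sup>2 + (y2 + p2)\<^sup>2) \<partial>lborel \<partial>lborel)"
    by (intro nn_integral_mono)
  also have "\<dots> = ennreal pi * (\<integral>\<^sup>+ u. H u * indicator {0..} u \<partial>lborel)"
    by (rule nn_integral_lborel_shifted_radial) measurable
  also have "\<dots> \<le> ennreal pi * (\<integral>\<^sup>+ u. H u \<partial>lborel)"
    by (intro mult_left_mono nn_integral_mono) (auto simp: indicator_def)
  also have "\<dots> \<le> ennreal pi * ennreal (2 * ln (1 + 4 * (5 * R\<^sup>2) * \<bar>1\<bar>) / \<bar>1\<bar>)"
    unfolding H_def by (intro mult_left_mono nn_integral_Icc_inverse_sqrt_affine_le) auto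
  also have "\<dots> = ennreal (2 * pi * ln (1 + 20 * R\<^sup>2))"
    using \<open>0 < R\<close> by (simp add: ennreal_mult[symmetric] mult_ac)
  finally show ?thesis .
qed

lemma nn_integral_cball_inverse_sqrt_quadratic_le:
  fixes \<xi> :: "'a::euclidean_space" and R \<gamma> :: real
  assumes dim: "DIM('a) \<ge> 2" and "0 < R" and "norm \<xi> \<le> R"
  shows "(\<integral>\<^sup>+ x. ennreal (1 / sqrt ((\<gamma> + (\<xi> + x) \<bullet> x)\<^sup>2 + 1)) * indicator (cball 0 R) x \<partial>lborel)
           \<le> ennreal ((2 * R) ^ (DIM('a) - 2) * (2 * pi * ln (1 + 20 * R\<^sup>2)))"
proof -
  obtain b1 :: 'a where b1: "b1 \<in> Basis"
    using nonempty_Basis by blast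
  obtain b2 where b2: "b2 \<in> Basis" "b2 \<noteq> b1"
    using obtain_other_Basis_vector[OF dim b1] by blast
  show ?thesis
  proof (rule nn_integral_cball_le_plane_slices[OF _ b1 b2(1) b2(2)[symmetric]])
    fix w :: 'a
    assume "w \<bullet> b1 = 0" "w \<bullet> b2 = 0"
    define p1 where "p1 = (\<xi> \<bullet> b1) / 2"
    define p2 where "p2 = (\<xi> \<bullet> b2) / 2"
    define c where "c = \<gamma> + \<xi> \<bullet> w + w \<bullet> w - p1\<^sup>2 - p2\<^sup>2"
    have square_completed: "\<gamma> + (\<xi> + (y1 *\<^sub>R b1 + y2 *\<^sub>R b2 + w)) \<bullet> (y1 *\<^sub>R b1 + y2 *\<^sub>R b2 + w)
        = c + ((y1 + p1)\<^sup>2 + (y2 + p2)\<^sup>2)" for y1 y2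
      using b1 b2 \<open>w \<bullet> b1 = 0\<close> \<open>w \<bullet> b2 = 0\<close>
      by (simp add: c_def p1_def p2_def inner_add_left inner_add_right inner_Basis inner_commute[of b1 w]
          inner_commute[of b2 w] power2_eq_square algebra_simps)
    have "\<bar>p1\<bar> \<le> R / 2" "\<bar>p2\<bar> \<le> R / 2"
      unfolding p1_def p2_def using Basis_le_norm[OF b1, of \<xi>] Basis_le_norm[OF b2(1), of \<xi>]
        \<open>norm \<xi> \<le> R\<close> by simp_all
    then show "(\<integral>\<^sup>+ y2. \<integral>\<^sup>+ y1. ennreal (1 / sqrt ((\<gamma> + (\<xi> + (y1 *\<^sub>R b1 + y2 *\<^sub>R b2 + w))
          \<bullet> (y1 *\<^sub>R b1 + y2 *\<^sub>R b2 + w))\<^sup>2 + 1)) * indicator {-R..R} y1 * indicator {-R..R} y2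
          \<partial>lborel \<partial>lborel) \<le> ennreal (2 * pi * ln (1 + 20 * R\<^sup>2))"
      unfolding square_completed by (rule nn_integral_square_inverse_sqrt_radial_le[OF \<open>0 < R\<close>])
  qed (use \<open>0 < R\<close> in simp_all)
qed

lemma cmod_real_add_ii_div:
  assumes "0 < t"
  shows "cmod (complex_of_real A + \<i> / complex_of_real t) = sqrt (A\<^sup>2 + (1 / t)\<^sup>2)"
proof -
  have "complex_of_real A + \<i> / complex_of_real t = Complex A (1 / t)"
    by (simp add: complex_eq_iff)
  then show ?thesis by (simp add: cmod_def)
qed

lemma inverse_cmod_real_add_ii_div_le:
  assumes "0 < t"
  shows "1 / cmod (complex_of_real A + \<i> / complex_of_real t) \<le> t"
    and "A \<noteq> 0 \<Longrightarrow> 1 / cmod (complex_of_real A + \<i> / complex_of_real t) \<le> 1 / \<bar>A\<bar>"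
    and "t \<le> 1 \<Longrightarrow> 1 / cmod (complex_of_real A + \<i> / complex_of_real t) \<le> 1 / sqrt (A\<^sup>2 + 1)"
proof -
  have pos: "0 < sqrt (A\<^sup>2 + (1 / t)\<^sup>2)"
    using assms by (simp add: add_nonneg_pos)
  show "1 / cmod (complex_of_real A + \<i> / complex_of_real t) \<le> t"
    using divide_left_mono[OF real_le_rsqrt[of "1 / t" "A\<^sup>2 + (1 / t)\<^sup>2"], of 1] pos assms
    by (simp add: cmod_real_add_ii_div)
  show "1 / cmod (complex_of_real A + \<i> / complex_of_real t) \<le> 1 / \<bar>A\<bar>" if "A \<noteq> 0"
    using divide_left_mono[OF real_le_rsqrt[of "\<bar>A\<bar>" "A\<^sup>2 + (1 / t)\<^sup>2"], of 1] pos assms that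
    by (simp add: cmod_real_add_ii_div)
  show "1 / cmod (complex_of_real A + \<i> / complex_of_real t) \<le> 1 / sqrt (A\<^sup>2 + 1)" if "t \<le> 1"
  proof -
    have "1 \<le> (1 / t)\<^sup>2"
      using assms that by (simp add: one_le_power)
    then have "sqrt (A\<^sup>2 + 1) \<le> sqrt (A\<^sup>2 + (1 / t)\<^sup>2)"
      by simp
    then show ?thesis
      unfolding cmod_real_add_ii_div[OF assms] by (rule divide_left_mono) (use pos in \<open>auto intro!: mult_pos_pos simp: add_nonneg_pos\<close>)
  qed
qed

lemma cutoff_div_cmod_real_add_ii_div_le:
  assumes "0 < t" "0 < r"
  shows "(if r \<le> \<bar>A\<bar> then 1 else 0) / cmod (complex_of_real A + \<i> / complex_of_real t) \<le> 1 / r"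
proof (cases "r \<le> \<bar>A\<bar>")
  case True
  then have "1 / cmod (complex_of_real A + \<i> / complex_of_real t) \<le> 1 / \<bar>A\<bar>"
    using assms by (intro inverse_cmod_real_add_ii_div_le(2)) auto
  also have "\<dots> \<le> 1 / r"
    using True assms by (intro divide_left_mono) auto
  finally show ?thesis
    using True by simp
qed (use assms in simp)

lemma ln_two_le_abs_ln:
  fixes eps :: real
  assumes "0 < eps" "eps \<le> 1 / 2" shows "ln 2 \<le> \<bar>ln eps\<bar>"
proof -
  have "ln 2 \<le> ln (1 / eps)"
    using assms by (subst ln_le_cancel_iff) (auto simp: field_simps)
  then show ?thesis
    using assms by (simp add: ln_div)
qed

lemma ln_one_plus_mult_div_square_le:
  fixes eps a K :: real
  assumes "0 < eps" "eps \<le> 1 / 2" "0 \<le> a"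
  shows "ln (1 + a * (K / eps)\<^sup>2) \<le> (ln (1 + a * K\<^sup>2) / ln 2 + 2) * \<bar>ln eps\<bar>"
proof -
  have "0 < 1 + a * K\<^sup>2"
    using assms by (simp add: add_pos_nonneg)
  have "1 + a * (K / eps)\<^sup>2 \<le> (1 + a * K\<^sup>2) / eps\<^sup>2"
    using assms power_le_one[of eps 2] by (simp add: power_divide field_simps)
  then have "ln (1 + a * (K / eps)\<^sup>2) \<le> ln ((1 + a * K\<^sup>2) / eps\<^sup>2)"
    using assms by (intro ln_mono) (auto simp: add_pos_nonneg)
  also have "\<dots> = ln (1 + a * K\<^sup>2) + 2 * \<bar>ln eps\<bar>"
    using assms \<open>0 < 1 + a * K\<^sup>2\<close> ln_less_zero[of eps] by (simp add: ln_div ln_realpow)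
  also have "ln (1 + a * K\<^sup>2) = ln (1 + a * K\<^sup>2) / ln 2 * ln 2"
    by simp
  also have "\<dots> \<le> ln (1 + a * K\<^sup>2) / ln 2 * \<bar>ln eps\<bar>"
    using assms by (intro mult_left_mono ln_two_le_abs_ln) auto
  finally show ?thesis
    by (simp add: distrib_right)
qed

lemma div_power_eq_powr:
  fixes eps a :: real
  assumes "0 < eps" shows "(a / eps) ^ n = a ^ n * eps powr (- real n)"
  using assms by (simp add: powr_minus powr_realpow field_simps)

lemma nn_integral_freqBall_le_const:
  fixes g :: "'a::euclidean_space \<Rightarrow> real"
  assumes "0 < eps" "0 \<le> K" "\<And>x. g x \<le> c" "0 \<le> c"
  shows "(\<integral>\<^sup>+ x \<in> freqBall K eps. ennreal (g x) \<partial>lborel)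
           \<le> ennreal (c * unit_ball_vol DIM('a) * K ^ DIM('a) * eps powr (- real DIM('a)))"
proof -
  have "(\<integral>\<^sup>+ x \<in> freqBall K eps. ennreal (g x) \<partial>lborel)
      \<le> (\<integral>\<^sup>+ x. ennreal c * indicator (cball (0::'a) (K / eps)) x \<partial>lborel)"
    unfolding freqBall_def using assms(3) by (intro nn_integral_mono mult_right_mono ennreal_leI) auto
  also have "\<dots> = ennreal (c * unit_ball_vol DIM('a) * (K / eps) ^ DIM('a))"
    using assms by (simp add: nn_integral_cmult_indicator emeasure_cball ennreal_mult'[symmetric] mult.assoc)
  finally show ?thesis
    using assms by (simp add: div_power_eq_powr mult.assoc)
qed

lemma scaled_power_mult_ln_le:
  fixes eps a c K :: real
  assumes "0 < eps" "eps \<le> 1 / 2" "0 \<le> a" "0 \<le> c" "0 \<le> K" "k \<le> n"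
  shows "(2 * (K / eps)) ^ (n - k) * (c * ln (1 + a * (K / eps)\<^sup>2))
    \<le> (2 * K) ^ (n - k) * c * (ln (1 + a * K\<^sup>2) / ln 2 + 2) * eps powr (real k - real n) * \<bar>ln eps\<bar>"
proof -
  have power_eq: "(2 * (K / eps)) ^ (n - k) = (2 * K) ^ (n - k) * eps powr (real k - real n)"
    using div_power_eq_powr[OF assms(1), of "2 * K" "n - k"] assms(6) by (simp add: of_nat_diff)
  have "ln (1 + a * (K / eps)\<^sup>2) \<le> (ln (1 + a * K\<^sup>2) / ln 2 + 2) * \<bar>ln eps\<bar>"
    using assms by (intro ln_one_plus_mult_div_square_le)
  then have "c * ln (1 + a * (K / eps)\<^sup>2) \<le> c * ((ln (1 + a * K\<^sup>2) / ln 2 + 2) * \<bar>ln eps\<bar>)"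
    using assms(4) by (rule mult_left_mono)
  then have "(2 * K) ^ (n - k) * eps powr (real k - real n) * (c * ln (1 + a * (K / eps)\<^sup>2))
      \<le> (2 * K) ^ (n - k) * eps powr (real k - real n) * (c * ((ln (1 + a * K\<^sup>2) / ln 2 + 2) * \<bar>ln eps\<bar>))"
    by (rule mult_left_mono) (use assms(1,5) in auto)
  then show ?thesis
    unfolding power_eq by (simp only: mult_ac)
qed

definition linear_phase_const :: "real \<Rightarrow> nat \<Rightarrow> real" where
  "linear_phase_const K d = (2 * K) ^ (d - 1) * (2 * real d) * (ln (1 + 4 * K\<^sup>2) / ln 2 + 2)"

lemma linear_phase_const_nonneg: "0 \<le> K \<Longrightarrow> 0 \<le> linear_phase_const K d"
  unfolding linear_phase_const_def by simp

lemma freqBall_bound_linear_phase_nonzero: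
  fixes \<xi> :: "'a::euclidean_space"
  assumes dim: "DIM('a) \<ge> 2" and "0 \<le> K" and eps: "0 < eps" "eps \<le> 1 / 2"
    and "\<xi> \<noteq> 0" "norm \<xi> \<le> K / eps" and t: "0 < t" "t \<le> 1"
  shows "(\<integral>\<^sup>+ x \<in> freqBall K eps. ennreal (1 / cmod (complex_of_real (\<gamma> + \<xi> \<bullet> x) + \<i> / complex_of_real t)) \<partial>lborel)
           \<le> ennreal (linear_phase_const K DIM('a) * eps powr (1 - real DIM('a)) / norm \<xi> * \<bar>ln eps\<bar>)"
proof -
  define d where "d = DIM('a)"
  have "(\<integral>\<^sup>+ x \<in> freqBall K eps. ennreal (1 / cmod (complex_of_real (\<gamma> + \<xi> \<bullet> x) + \<i> / complex_of_real t)) \<partial>lborel)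
      \<le> (\<integral>\<^sup>+ x. ennreal (1 / sqrt ((\<gamma> + \<xi> \<bullet> x)\<^sup>2 + 1)) * indicator (cball 0 (K / eps)) x \<partial>lborel)"
    unfolding freqBall_def using t
    by (intro nn_integral_mono mult_right_mono ennreal_leI inverse_cmod_real_add_ii_div_le(3)) auto
  also have "\<dots> \<le> ennreal ((2 * (K / eps)) ^ (d - 1) * (2 * real d / norm \<xi> * ln (1 + 4 * (K / eps)\<^sup>2)))"
    unfolding d_def using dim \<open>\<xi> \<noteq> 0\<close> \<open>norm \<xi> \<le> K / eps\<close> zero_less_norm_iff[of \<xi>]
    by (intro nn_integral_cball_inverse_sqrt_linear_le) linarith+
  also have "\<dots> \<le> ennreal ((2 * K) ^ (d - 1) * (2 * real d / norm \<xi>) * (ln (1 + 4 * K\<^sup>2) / ln 2 + 2)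
      * eps powr (real 1 - real d) * \<bar>ln eps\<bar>)"
    using eps \<open>0 \<le> K\<close> dim unfolding d_def by (intro ennreal_leI scaled_power_mult_ln_le) auto
  also have "\<dots> = ennreal (linear_phase_const K d * eps powr (1 - real d) / norm \<xi> * \<bar>ln eps\<bar>)"
    unfolding linear_phase_const_def by (simp add: divide_inverse mult_ac)
  finally show ?thesis
    unfolding d_def .
qed

lemma freqBall_bound_linear_phase:
  assumes dim: "DIM('a::euclidean_space) \<ge> 2" and K: "K \<ge> 1"
  shows "\<exists>C::real. \<forall>eps (\<xi>t::'a) t \<gamma>.
      0 < eps \<and> eps \<le> 1/2 \<and> norm \<xi>t \<le> K / eps \<and> 0 < t \<and> t \<le> 1 \<longrightarrow>
      (\<integral>\<^sup>+ x \<in> freqBall K eps.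
          ennreal (1 / cmod (complex_of_real (\<gamma> + \<xi>t \<bullet> x) + \<i> / complex_of_real t)) \<partial>lborel)
        \<le> ennreal (C * eps powr (1 - real DIM('a))
             * (if \<xi>t = 0 then t / eps else min (1 / norm \<xi>t) (t / eps)) * \<bar>ln eps\<bar>)"
proof -
  define C\<^sub>1 where "C\<^sub>1 = linear_phase_const K DIM('a)"
  have "0 \<le> K"
    using K by simp
  then have "0 \<le> C\<^sub>1"
    unfolding C\<^sub>1_def by (rule linear_phase_const_nonneg)
  note linear_bound = freqBall_bound_linear_phase_nonzero[OF dim \<open>0 \<le> K\<close>, folded C\<^sub>1_def]
  define C\<^sub>0 where "C\<^sub>0 = unit_ball_vol DIM('a) * K ^ DIM('a) / ln 2"
  show ?thesis
  proof (intro exI[of _ "max C\<^sub>0 C\<^sub>1"] allI impI, elim conjE)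
    fix eps t \<gamma> :: real and \<xi> :: 'a
    assume eps: "0 < eps" "eps \<le> 1 / 2" and "norm \<xi> \<le> K / eps" and t: "0 < t" "t \<le> 1"
    define P where "P = eps powr (1 - real DIM('a))"
    have "0 < P" "0 < \<bar>ln eps\<bar>"
      unfolding P_def using eps ln_less_zero[of eps] by auto
    let ?I = "\<integral>\<^sup>+ x \<in> freqBall K eps.
      ennreal (1 / cmod (complex_of_real (\<gamma> + \<xi> \<bullet> x) + \<i> / complex_of_real t)) \<partial>lborel"
    have "?I \<le> ennreal (t * unit_ball_vol DIM('a) * K ^ DIM('a) * eps powr (- real DIM('a)))"
      using eps K t by (intro nn_integral_freqBall_le_const inverse_cmod_real_add_ii_div_le(1)) auto
    also have "\<dots> = ennreal (C\<^sub>0 * P * (t / eps) * ln 2)"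
      unfolding C\<^sub>0_def P_def using eps by (simp add: powr_diff powr_minus field_simps)
    also have "\<dots> \<le> ennreal (max C\<^sub>0 C\<^sub>1 * P * (t / eps) * \<bar>ln eps\<bar>)"
      using \<open>0 < P\<close> eps t ln_two_le_abs_ln[OF eps] \<open>0 \<le> C\<^sub>1\<close>
      by (intro ennreal_leI mult_mono) auto
    finally have volume_bound: "?I \<le> ennreal (max C\<^sub>0 C\<^sub>1 * P * (t / eps) * \<bar>ln eps\<bar>)" .
    have decay_bound: "?I \<le> ennreal (max C\<^sub>0 C\<^sub>1 * P * (1 / norm \<xi>) * \<bar>ln eps\<bar>)" if "\<xi> \<noteq> 0"
    proof -
      have "?I \<le> ennreal (C\<^sub>1 * P * (1 / norm \<xi>) * \<bar>ln eps\<bar>)"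
        using linear_bound[OF eps that \<open>norm \<xi> \<le> K / eps\<close> t] unfolding P_def by simp
      also have "\<dots> \<le> ennreal (max C\<^sub>0 C\<^sub>1 * P * (1 / norm \<xi>) * \<bar>ln eps\<bar>)"
        using \<open>0 < P\<close> \<open>0 < \<bar>ln eps\<bar>\<close> by (intro ennreal_leI mult_right_mono) auto
      finally show ?thesis .
    qed
    show "?I \<le> ennreal (max C\<^sub>0 C\<^sub>1 * eps powr (1 - real DIM('a))
        * (if \<xi> = 0 then t / eps else min (1 / norm \<xi>) (t / eps)) * \<bar>ln eps\<bar>)"
      using volume_bound decay_bound unfolding P_def by (auto simp: min_def)
  qed
qed

lemma nn_integral_freqBall_const_div:
  fixes g :: "'a::euclidean_space \<Rightarrow> real"
  assumes "0 \<le> a" and [measurable]: "g \<in> borel_measurable borel"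
  shows "(\<integral>\<^sup>+ x \<in> freqBall K eps. ennreal (a / g x) \<partial>lborel)
           = ennreal a * (\<integral>\<^sup>+ x \<in> freqBall K eps. ennreal (1 / g x) \<partial>lborel)"
proof -
  have "ennreal (a / g x) = ennreal a * ennreal (1 / g x)" for x
    using ennreal_mult'[OF \<open>0 \<le> a\<close>, of "1 / g x"] by simp
  moreover have [measurable]: "freqBall K eps \<in> sets (borel :: 'a measure)"
    unfolding freqBall_def by simp
  ultimately show ?thesis
    by (simp only: mult.assoc) (rule nn_integral_cmult, measurable)
qed

lemma freqBall_bound_cutoff_small_frequency:
  fixes \<xi> :: "'a::euclidean_space"
  assumes "0 < \<delta>" "0 < eps" "0 < K" "0 < t" "norm \<xi> < \<delta> / eps"
  shows "(\<integral>\<^sup>+ x \<in> freqBall K eps.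
            ennreal ((if norm \<xi> \<ge> \<delta> / eps \<or> \<bar>\<gamma> + \<xi> \<bullet> x\<bar> \<ge> \<delta> / eps\<^sup>2 then 1 else 0)
              / cmod (complex_of_real (\<gamma> + \<xi> \<bullet> x) + \<i> / complex_of_real t)) \<partial>lborel)
           \<le> ennreal (unit_ball_vol DIM('a) * K ^ DIM('a) / \<delta> * eps powr (2 - real DIM('a)))"
proof -
  have "(if norm \<xi> \<ge> \<delta> / eps \<or> \<bar>\<gamma> + \<xi> \<bullet> x\<bar> \<ge> \<delta> / eps\<^sup>2 then 1 else 0)
      / cmod (complex_of_real (\<gamma> + \<xi> \<bullet> x) + \<i> / complex_of_real t) \<le> eps\<^sup>2 / \<delta>" for x
    using cutoff_div_cmod_real_add_ii_div_le[OF \<open>0 < t\<close>, of "\<delta> / eps\<^sup>2" "\<gamma> + \<xi> \<bullet> x"] assms by simp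
  then have "(\<integral>\<^sup>+ x \<in> freqBall K eps.
            ennreal ((if norm \<xi> \<ge> \<delta> / eps \<or> \<bar>\<gamma> + \<xi> \<bullet> x\<bar> \<ge> \<delta> / eps\<^sup>2 then 1 else 0)
              / cmod (complex_of_real (\<gamma> + \<xi> \<bullet> x) + \<i> / complex_of_real t)) \<partial>lborel)
      \<le> ennreal (eps\<^sup>2 / \<delta> * unit_ball_vol DIM('a) * K ^ DIM('a) * eps powr (- real DIM('a)))"
    using assms by (intro nn_integral_freqBall_le_const) auto
  also have "\<dots> = ennreal (unit_ball_vol DIM('a) * K ^ DIM('a) / \<delta> * eps powr (2 - real DIM('a)))"
    using assms by (simp add: powr_diff powr_minus power2_eq_square field_simps)
  finally show ?thesis .
qed

lemma powr_one_minus_mult_self: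
  fixes x a :: real
  assumes "0 < x" shows "x powr (1 - a) * x = x powr (2 - a)"
  using assms by (simp add: powr_diff power2_eq_square field_simps)

lemma freqBall_bound_cutoff_large_frequency:
  fixes \<xi> :: "'a::euclidean_space"
  assumes dim: "DIM('a) \<ge> 2" and "0 \<le> K" "0 < \<delta>" and eps: "0 < eps" "eps \<le> 1 / 2"
    and "\<delta> / eps \<le> norm \<xi>" "norm \<xi> \<le> K / eps" and t: "0 < t" "t \<le> 1"
  shows "(\<integral>\<^sup>+ x \<in> freqBall K eps.
            ennreal ((if norm \<xi> \<ge> \<delta> / eps \<or> \<bar>\<gamma> + \<xi> \<bullet> x\<bar> \<ge> \<delta> / eps\<^sup>2 then 1 else 0)
              / cmod (complex_of_real (\<gamma> + \<xi> \<bullet> x) + \<i> / complex_of_real t)) \<partial>lborel)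
           \<le> ennreal (linear_phase_const K DIM('a) / \<delta> * eps powr (2 - real DIM('a)) * \<bar>ln eps\<bar>)"
proof -
  define C where "C = linear_phase_const K DIM('a)"
  have "0 < norm \<xi>"
    using divide_pos_pos[OF \<open>0 < \<delta>\<close> eps(1)] \<open>\<delta> / eps \<le> norm \<xi>\<close> by linarith
  have "(\<integral>\<^sup>+ x \<in> freqBall K eps.
            ennreal ((if norm \<xi> \<ge> \<delta> / eps \<or> \<bar>\<gamma> + \<xi> \<bullet> x\<bar> \<ge> \<delta> / eps\<^sup>2 then 1 else 0)
              / cmod (complex_of_real (\<gamma> + \<xi> \<bullet> x) + \<i> / complex_of_real t)) \<partial>lborel)
      \<le> (\<integral>\<^sup>+ x \<in> freqBall K eps.
          ennreal (1 / cmod (complex_of_real (\<gamma> + \<xi> \<bullet> x) + \<i> / complex_of_real t)) \<partial>lborel)"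
    by (intro nn_integral_mono mult_right_mono ennreal_leI divide_right_mono) auto
  also have "\<dots> \<le> ennreal (C * eps powr (1 - real DIM('a)) * (1 / norm \<xi>) * \<bar>ln eps\<bar>)"
    unfolding C_def using freqBall_bound_linear_phase_nonzero[OF dim \<open>0 \<le> K\<close> eps _ \<open>norm \<xi> \<le> K / eps\<close> t]
      \<open>0 < norm \<xi>\<close> by simp
  also have "\<dots> \<le> ennreal (C * eps powr (1 - real DIM('a)) * (eps / \<delta>) * \<bar>ln eps\<bar>)"
    using \<open>\<delta> / eps \<le> norm \<xi>\<close> \<open>0 < \<delta>\<close> eps \<open>0 < norm \<xi>\<close> \<open>0 \<le> K\<close>
    by (intro ennreal_leI mult_right_mono mult_left_mono) (auto simp: field_simps C_def linear_phase_const_nonneg)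
  also have "C * eps powr (1 - real DIM('a)) * (eps / \<delta>) * \<bar>ln eps\<bar> = C / \<delta> * (eps powr (1 - real DIM('a)) * eps) * \<bar>ln eps\<bar>"
    by simp
  finally show ?thesis
    unfolding C_def powr_one_minus_mult_self[OF eps(1)] .
qed

lemma freqBall_bound_linear_phase_cutoff:
  assumes dim: "DIM('a::euclidean_space) \<ge> 2" and K: "K \<ge> 1" and "0 < \<delta>"
  shows "\<exists>C::real. \<forall>eps (\<xi>t::'a) t \<gamma>.
        0 < eps \<and> eps \<le> 1/2 \<and> norm \<xi>t \<le> K / eps \<and> 0 < t \<and> t \<le> 1 \<longrightarrow>
        (\<integral>\<^sup>+ x \<in> freqBall K eps.
            ennreal ((if norm \<xi>t \<ge> \<delta> / eps \<or> \<bar>\<gamma> + \<xi>t \<bullet> x\<bar> \<ge> \<delta> / eps\<^sup>2 then 1 else 0)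
              / cmod (complex_of_real (\<gamma> + \<xi>t \<bullet> x) + \<i> / complex_of_real t)) \<partial>lborel)
          \<le> ennreal (C * eps powr (2 - real DIM('a)) * \<bar>ln eps\<bar>)"
proof -
  define C\<^sub>0 where "C\<^sub>0 = unit_ball_vol DIM('a) * K ^ DIM('a) / (\<delta> * ln 2)"
  define C\<^sub>1 where "C\<^sub>1 = linear_phase_const K DIM('a) / \<delta>"
  have "0 \<le> C\<^sub>0"
    unfolding C\<^sub>0_def using K \<open>0 < \<delta>\<close> by (simp add: unit_ball_vol_nonneg)
  have "0 \<le> C\<^sub>1"
    unfolding C\<^sub>1_def using K \<open>0 < \<delta>\<close> by (simp add: linear_phase_const_nonneg)
  show ?thesis
  proof (intro exI[of _ "max C\<^sub>0 C\<^sub>1"] allI impI, elim conjE)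
    fix eps t \<gamma> :: real and \<xi> :: 'a
    assume eps: "0 < eps" "eps \<le> 1 / 2" and "norm \<xi> \<le> K / eps" and t: "0 < t" "t \<le> 1"
    define Q where "Q = eps powr (2 - real DIM('a))"
    have "0 < Q" "ln 2 \<le> \<bar>ln eps\<bar>"
      unfolding Q_def using eps ln_two_le_abs_ln[OF eps] by auto
    let ?I = "\<integral>\<^sup>+ x \<in> freqBall K eps.
      ennreal ((if norm \<xi> \<ge> \<delta> / eps \<or> \<bar>\<gamma> + \<xi> \<bullet> x\<bar> \<ge> \<delta> / eps\<^sup>2 then 1 else 0)
        / cmod (complex_of_real (\<gamma> + \<xi> \<bullet> x) + \<i> / complex_of_real t)) \<partial>lborel"
    have "?I \<le> ennreal (C\<^sub>1 * Q * \<bar>ln eps\<bar>)" if "\<delta> / eps \<le> norm \<xi>"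
      unfolding C\<^sub>1_def Q_def using dim K \<open>0 < \<delta>\<close> eps that \<open>norm \<xi> \<le> K / eps\<close> t
      by (intro freqBall_bound_cutoff_large_frequency) auto
    moreover have "?I \<le> ennreal (C\<^sub>0 * Q * \<bar>ln eps\<bar>)" if "norm \<xi> < \<delta> / eps"
    proof -
      have "?I \<le> ennreal (unit_ball_vol DIM('a) * K ^ DIM('a) / \<delta> * Q)"
        unfolding Q_def using \<open>0 < \<delta>\<close> eps K t that by (intro freqBall_bound_cutoff_small_frequency) auto
      also have "\<dots> = ennreal (C\<^sub>0 * Q * ln 2)"
        unfolding C\<^sub>0_def by simp
      also have "\<dots> \<le> ennreal (C\<^sub>0 * Q * \<bar>ln eps\<bar>)"
        using \<open>0 < Q\<close> \<open>ln 2 \<le> \<bar>ln eps\<bar>\<close> \<open>0 \<le> C\<^sub>0\<close> by (intro ennreal_leI mult_left_mono) auto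
      finally show ?thesis .
    qed
    moreover have "C\<^sub>0 * Q * \<bar>ln eps\<bar> \<le> max C\<^sub>0 C\<^sub>1 * Q * \<bar>ln eps\<bar>" "C\<^sub>1 * Q * \<bar>ln eps\<bar> \<le> max C\<^sub>0 C\<^sub>1 * Q * \<bar>ln eps\<bar>"
      using \<open>0 < Q\<close> by (intro mult_right_mono; simp)+
    ultimately show "?I \<le> ennreal (max C\<^sub>0 C\<^sub>1 * eps powr (2 - real DIM('a)) * \<bar>ln eps\<bar>)"
      unfolding Q_def by (cases "\<delta> / eps \<le> norm \<xi>") (force intro: order_trans ennreal_leI)+
  qed
qed

lemma C1_nonneg_vanishing_le_linear:
  assumes "C1_nonneg_vanishing m"
  obtains L where "0 \<le> L" "\<And>s. 0 \<le> s \<Longrightarrow> s \<le> K \<Longrightarrow> m s \<le> L * s"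
proof -
  from assms obtain m' where "m 0 = 0"
    and deriv: "\<And>x. 0 \<le> x \<Longrightarrow> (m has_real_derivative m' x) (at x within {0..})"
    and cont: "continuous_on {0..} m'"
    unfolding C1_nonneg_vanishing_def by blast
  have "compact (m' ` {0..K})"
    by (rule compact_continuous_image[OF continuous_on_subset[OF cont]]) auto
  then have "bounded (m' ` {0..K})"
    by (rule compact_imp_bounded)
  then obtain B where B: "\<And>x. x \<in> {0..K} \<Longrightarrow> norm (m' x) \<le> B"
    unfolding bounded_iff by blast
  have "m s \<le> max B 0 * s" if "0 \<le> s" "s \<le> K" for s
  proof -
    have "norm (m s - m 0) \<le> max B 0 * norm (s - 0)"
    proof (rule field_differentiable_bound[where S="{0..K}" and f'=m'])
      fix z assume "z \<in> {0..K}"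
      then show "(m has_field_derivative m' z) (at z within {0..K})"
        by (intro DERIV_subset[OF deriv]) auto
      show "norm (m' z) \<le> max B 0"
        using B[OF \<open>z \<in> {0..K}\<close>] by simp
    qed (use that in auto)
    then show ?thesis
      using \<open>m 0 = 0\<close> that by simp
  qed
  then show ?thesis
    using that[of "max B 0"] by simp
qed

lemma freqBall_bound_linear_phase_weighted:
  assumes dim: "DIM('a::euclidean_space) \<ge> 2" and K: "K \<ge> 1" and m: "C1_nonneg_vanishing m"
  shows "\<exists>C::real. \<forall>eps (\<xi>t::'a) t \<gamma>.
        0 < eps \<and> eps \<le> 1/2 \<and> norm \<xi>t \<le> K / eps \<and> 0 < t \<and> t \<le> 1 \<longrightarrow>
        (\<integral>\<^sup>+ x \<in> freqBall K eps.
            ennreal (m (eps * norm \<xi>t)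
              / cmod (complex_of_real (\<gamma> + \<xi>t \<bullet> x) + \<i> / complex_of_real t)) \<partial>lborel)
          \<le> ennreal (C * eps powr (2 - real DIM('a)) * \<bar>ln eps\<bar>)"
proof -
  from m have m_nonneg: "\<And>s. 0 \<le> s \<Longrightarrow> 0 \<le> m s" and "m 0 = 0"
    unfolding C1_nonneg_vanishing_def by auto
  obtain L where "0 \<le> L" and m_le: "\<And>s. 0 \<le> s \<Longrightarrow> s \<le> K \<Longrightarrow> m s \<le> L * s"
    using C1_nonneg_vanishing_le_linear[OF m] by blast
  define C\<^sub>1 where "C\<^sub>1 = linear_phase_const K DIM('a)"
  have "0 \<le> K"
    using K by simp
  then have "0 \<le> C\<^sub>1"
    unfolding C\<^sub>1_def by (rule linear_phase_const_nonneg)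
  note linear_bound = freqBall_bound_linear_phase_nonzero[OF dim \<open>0 \<le> K\<close>, folded C\<^sub>1_def]
  show ?thesis
  proof (intro exI[of _ "L * C\<^sub>1"] allI impI, elim conjE)
    fix eps t \<gamma> :: real and \<xi> :: 'a
    assume eps: "0 < eps" "eps \<le> 1 / 2" and "norm \<xi> \<le> K / eps" and t: "0 < t" "t \<le> 1"
    define a where "a = m (eps * norm \<xi>)"
    have "eps * norm \<xi> \<le> K"
      using eps \<open>norm \<xi> \<le> K / eps\<close> by (simp add: le_divide_eq mult.commute)
    then have "0 \<le> a" "a \<le> L * (eps * norm \<xi>)"
      unfolding a_def using eps by (intro m_nonneg m_le; simp)+
    let ?I = "\<integral>\<^sup>+ x \<in> freqBall K eps.
      ennreal (m (eps * norm \<xi>) / cmod (complex_of_real (\<gamma> + \<xi> \<bullet> x) + \<i> / complex_of_real t)) \<partial>lborel"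
    let ?J = "\<integral>\<^sup>+ x \<in> freqBall K eps.
      ennreal (1 / cmod (complex_of_real (\<gamma> + \<xi> \<bullet> x) + \<i> / complex_of_real t)) \<partial>lborel"
    have "?I = ennreal a * ?J"
      unfolding a_def[symmetric] using \<open>0 \<le> a\<close> by (rule nn_integral_freqBall_const_div) measurable
    also have "\<dots> \<le> ennreal (L * C\<^sub>1 * eps powr (2 - real DIM('a)) * \<bar>ln eps\<bar>)"
    proof (cases "\<xi> = 0")
      case True
      then show ?thesis
        using \<open>a \<le> L * (eps * norm \<xi>)\<close> \<open>0 \<le> a\<close> by simp
    next
      case False
      have "ennreal a * ?J
          \<le> ennreal (L * (eps * norm \<xi>)) * ennreal (C\<^sub>1 * eps powr (1 - real DIM('a)) / norm \<xi> * \<bar>ln eps\<bar>)"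
        using \<open>a \<le> L * (eps * norm \<xi>)\<close>
        by (intro mult_mono ennreal_leI linear_bound[OF eps False \<open>norm \<xi> \<le> K / eps\<close> t]) auto
      also have "\<dots> = ennreal (L * (eps * norm \<xi>) * (C\<^sub>1 * eps powr (1 - real DIM('a)) / norm \<xi> * \<bar>ln eps\<bar>))"
        using \<open>0 \<le> L\<close> \<open>0 \<le> C\<^sub>1\<close> eps by (intro ennreal_mult[symmetric] mult_nonneg_nonneg divide_nonneg_nonneg) auto
      also have "L * (eps * norm \<xi>) * (C\<^sub>1 * eps powr (1 - real DIM('a)) / norm \<xi> * \<bar>ln eps\<bar>)
          = L * C\<^sub>1 * (eps powr (1 - real DIM('a)) * eps) * \<bar>ln eps\<bar>"
        using False by (simp add: divide_inverse mult_ac)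
      finally show ?thesis
        unfolding powr_one_minus_mult_self[OF eps(1)] .
    qed
    finally show "?I \<le> ennreal (L * C\<^sub>1 * eps powr (2 - real DIM('a)) * \<bar>ln eps\<bar>)" .
  qed
qed

lemma freqBall_bound_quadratic_phase:
  assumes dim: "DIM('a::euclidean_space) \<ge> 2" and K: "K \<ge> 1"
  shows "\<exists>C::real. \<forall>eps (\<xi>t::'a) t \<gamma>.
      0 < eps \<and> eps \<le> 1/2 \<and> norm \<xi>t \<le> K / eps \<and> 0 < t \<and> t \<le> 1 \<longrightarrow>
      (\<integral>\<^sup>+ x \<in> freqBall K eps.
          ennreal (1 / cmod (complex_of_real (\<gamma> + (\<xi>t + x) \<bullet> x) + \<i> / complex_of_real t)) \<partial>lborel)
        \<le> ennreal (C * eps powr (2 - real DIM('a)) * \<bar>ln eps\<bar>)"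
proof (intro exI allI impI, elim conjE)
  define d where "d = DIM('a)"
  fix eps t \<gamma> :: real and \<xi> :: 'a
  assume eps: "0 < eps" "eps \<le> 1 / 2" and "norm \<xi> \<le> K / eps" and t: "0 < t" "t \<le> 1"
  have "(\<integral>\<^sup>+ x \<in> freqBall K eps.
        ennreal (1 / cmod (complex_of_real (\<gamma> + (\<xi> + x) \<bullet> x) + \<i> / complex_of_real t)) \<partial>lborel)
      \<le> (\<integral>\<^sup>+ x. ennreal (1 / sqrt ((\<gamma> + (\<xi> + x) \<bullet> x)\<^sup>2 + 1)) * indicator (cball 0 (K / eps)) x \<partial>lborel)"
    unfolding freqBall_def using t
    by (intro nn_integral_mono mult_right_mono ennreal_leI inverse_cmod_real_add_ii_div_le(3)) auto
  also have "\<dots> \<le> ennreal ((2 * (K / eps)) ^ (d - 2) * (2 * pi * ln (1 + 20 * (K / eps)\<^sup>2)))"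
    unfolding d_def using dim \<open>norm \<xi> \<le> K / eps\<close> K eps
    by (intro nn_integral_cball_inverse_sqrt_quadratic_le) auto
  also have "\<dots> \<le> ennreal ((2 * K) ^ (d - 2) * (2 * pi) * (ln (1 + 20 * K\<^sup>2) / ln 2 + 2)
      * eps powr (real 2 - real d) * \<bar>ln eps\<bar>)"
    using eps K dim unfolding d_def by (intro ennreal_leI scaled_power_mult_ln_le) auto
  finally show "(\<integral>\<^sup>+ x \<in> freqBall K eps.
        ennreal (1 / cmod (complex_of_real (\<gamma> + (\<xi> + x) \<bullet> x) + \<i> / complex_of_real t)) \<partial>lborel)
      \<le> ennreal (((2 * K) ^ (DIM('a) - 2) * (2 * pi) * (ln (1 + 20 * K\<^sup>2) / ln 2 + 2))
        * eps powr (2 - real DIM('a)) * \<bar>ln eps\<bar>)"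
    unfolding d_def by simp
qed

theorem lemmaB1:
  fixes K :: real
  assumes dim: "DIM('a::euclidean_space) \<ge> 2" and K: "K \<ge> 1"
  shows
  "(\<exists>C::real. \<forall>eps (\<xi>t::'a) t \<gamma>.
      0 < eps \<and> eps \<le> 1/2 \<and> norm \<xi>t \<le> K / eps \<and> 0 < t \<and> t \<le> 1 \<longrightarrow>
      (\<integral>\<^sup>+ x \<in> freqBall K eps.
          ennreal (1 / cmod (complex_of_real (\<gamma> + \<xi>t \<bullet> x) + \<i> / complex_of_real t)) \<partial>lborel)
        \<le> ennreal (C * eps powr (1 - real DIM('a))
             * (if \<xi>t = 0 then t / eps else min (1 / norm \<xi>t) (t / eps)) * \<bar>ln eps\<bar>))
   \<and> (\<forall>\<delta>::real. 0 < \<delta> \<and> \<delta> \<le> 1 \<longrightarrow>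
      (\<exists>C::real. \<forall>eps (\<xi>t::'a) t \<gamma>.
        0 < eps \<and> eps \<le> 1/2 \<and> norm \<xi>t \<le> K / eps \<and> 0 < t \<and> t \<le> 1 \<longrightarrow>
        (\<integral>\<^sup>+ x \<in> freqBall K eps.
            ennreal ((if norm \<xi>t \<ge> \<delta> / eps \<or> \<bar>\<gamma> + \<xi>t \<bullet> x\<bar> \<ge> \<delta> / eps\<^sup>2 then 1 else 0)
              / cmod (complex_of_real (\<gamma> + \<xi>t \<bullet> x) + \<i> / complex_of_real t)) \<partial>lborel)
          \<le> ennreal (C * eps powr (2 - real DIM('a)) * \<bar>ln eps\<bar>)))
   \<and> (\<forall>m::real \<Rightarrow> real. C1_nonneg_vanishing m \<longrightarrow>
      (\<exists>C::real. \<forall>eps (\<xi>t::'a) t \<gamma>.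
        0 < eps \<and> eps \<le> 1/2 \<and> norm \<xi>t \<le> K / eps \<and> 0 < t \<and> t \<le> 1 \<longrightarrow>
        (\<integral>\<^sup>+ x \<in> freqBall K eps.
            ennreal (m (eps * norm \<xi>t)
              / cmod (complex_of_real (\<gamma> + \<xi>t \<bullet> x) + \<i> / complex_of_real t)) \<partial>lborel)
          \<le> ennreal (C * eps powr (2 - real DIM('a)) * \<bar>ln eps\<bar>)))
   \<and> (\<exists>C::real. \<forall>eps (\<xi>t::'a) t \<gamma>.
      0 < eps \<and> eps \<le> 1/2 \<and> norm \<xi>t \<le> K / eps \<and> 0 < t \<and> t \<le> 1 \<longrightarrow>
      (\<integral>\<^sup>+ x \<in> freqBall K eps.
          ennreal (1 / cmod (complex_of_real (\<gamma> + (\<xi>t + x) \<bullet> x) + \<i> / complex_of_real t)) \<partial>lborel)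
        \<le> ennreal (C * eps powr (2 - real DIM('a)) * \<bar>ln eps\<bar>))"
  using freqBall_bound_linear_phase[OF dim K] freqBall_bound_linear_phase_cutoff[OF dim K]
    freqBall_bound_linear_phase_weighted[OF dim K] freqBall_bound_quadratic_phase[OF dim K]
  by blast

end
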